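(* Let $t\ge 1$ and let $0<m_1<m_2<\dots<m_t$ be integers. Then the multi-delimiter code $D_{m_1,\ldots,m_t}$ is complete, i.e. for every binary word $w\notin D_{m_1,\ldots,m_t}$ the set $D_{m_1,\ldots,m_t}\cup\{w\}$ is not uniquely decodable.
   Context: Binary words are elements of $\{0,1\}^*$; $1^r$ denotes the word of $r$ consecutive ones. For integers $0<m_1<\dots<m_t$, the multi-delimiter code $D_{m_1,\ldots,m_t}$ is the set consisting of the words $1^{m_i}0$ for $i=1,\dots,t$, together with all binary words $w$ satisfying: (i) for no $i$ does $w$ start with $1^{m_i}0$; (ii) $w$ ends with the suffix $01^{m_i}0$ for some $i$; (iii) for every $i$, the word $01^{m_i}0$ occurs in $w$ nowhere except as a suffix of $w$. A set of binary words is uniquely decodable if every finite concatenation of its words has a unique factorization into words of the set. *)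

theory Defs
  imports Main "HOL-Library.Sublist"
begin

text \<open>Binary words: lists of booleans, True = 1, False = 0.\<close>
type_synonym word = "bool list"

definition ones :: "nat \<Rightarrow> word" where
  "ones r = replicate r True"

definition occurs_at :: "word \<Rightarrow> word \<Rightarrow> nat \<Rightarrow> bool" where
  "occurs_at u w i \<longleftrightarrow> i + length u \<le> length w \<and> take (length u) (drop i w) = u"

text \<open>Multi-delimiter code D_{m_1,...,m_t}; the delimiter lengths are given as the set M.\<close>
definition multi_delim_code :: "nat set \<Rightarrow> word set" where
  "multi_delim_code M =
     {ones m @ [False] | m. m \<in> M} \<union>
     {w. (\<forall>m\<in>M. \<not> prefix (ones m @ [False]) w)
       \<and> (\<exists>m\<in>M. suffix ([False] @ ones m @ [False]) w)
       \<and> (\<forall>m\<in>M. \<forall>i. occurs_at ([False] @ ones m @ [False]) w i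
              \<longrightarrow> i + length ([False] @ ones m @ [False]) = length w)}"

definition uniquely_decodable :: "word set \<Rightarrow> bool" where
  "uniquely_decodable C \<longleftrightarrow>
     (\<forall>xs ys. set xs \<subseteq> C \<longrightarrow> set ys \<subseteq> C \<longrightarrow> concat xs = concat ys \<longrightarrow> xs = ys)"

end

theory Submission
  imports Defs
begin

text \<open>
  Since 0 1^m 0 is itself a codeword, it suffices to factor w 0 1^m 0 into codewords
  alone: then [w, 0 1^m 0] is a second, different factorization. Such a factorization is
  found greedily from the left. If the remaining word starts with some 1^k 0, that is the
  next codeword; otherwise the shortest prefix ending in an occurrence of some 0 1^k 0 is
  a codeword. The appended 0 1^m 0 guarantees such an occurrence, and a delimiter can end
  inside 0 1^m 0 only after its first or its last letter, so the process stops exactly at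
  the end of the word, possibly with the codeword 1^m 0.
\<close>

definition delim :: "nat \<Rightarrow> word" where
  "delim m = [False] @ ones m @ [False]"

lemma length_delim [simp]: "length (delim m) = m + 2"
  by (simp add: delim_def ones_def)

lemma nth_delim: "j < m + 2 \<Longrightarrow> delim m ! j = (0 < j \<and> j \<le> m)"
  by (auto simp: delim_def ones_def nth_append nth_Cons split: nat.split)

lemma multi_delim_code_iff:
  "w \<in> multi_delim_code M \<longleftrightarrow>
     (\<exists>m\<in>M. w = ones m @ [False]) \<or>
     ((\<forall>m\<in>M. \<not> prefix (ones m @ [False]) w)
       \<and> (\<exists>m\<in>M. suffix (delim m) w)
       \<and> (\<forall>m\<in>M. \<forall>i. occurs_at (delim m) w i \<longrightarrow> i + length (delim m) = length w))"
  unfolding multi_delim_code_def delim_def by auto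

lemma ones_False_in_multi_delim_code: "m \<in> M \<Longrightarrow> ones m @ [False] \<in> multi_delim_code M"
  unfolding multi_delim_code_iff by auto

lemma occurs_at_nth:
  assumes "occurs_at u w i" "j < length u"
  shows "w ! (i + j) = u ! j"
proof -
  have "u ! j = take (length u) (drop i w) ! j" using assms(1) by (simp add: occurs_at_def)
  also have "\<dots> = drop i w ! j" using assms(2) by simp
  also have "\<dots> = w ! (i + j)" using assms unfolding occurs_at_def by simp
  finally show ?thesis by simp
qed

lemma occurs_at_take:
  assumes "occurs_at u (take e w) i"
  shows "occurs_at u w i" "i + length u \<le> e"
  using assms unfolding occurs_at_def
  by (auto simp: take_drop min_def split: if_splits)

lemma delim_in_multi_delim_code:
  assumes "m \<in> M" and pos: "\<forall>k\<in>M. 0 < k"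
  shows "delim m \<in> multi_delim_code M"
proof -
  have no_prefix: "\<not> prefix (ones k @ [False]) (delim m)" if "k \<in> M" for k
  proof
    assume "prefix (ones k @ [False]) (delim m)"
    then have "(ones k @ [False]) ! 0 = delim m ! 0"
      by (metis prefix_def nth_append length_greater_0_conv snoc_eq_iff_butlast)
    with pos that show False by (simp add: ones_def nth_append nth_delim)
  qed
  have only_at_end: "i + length (delim k) = length (delim m)"
    if "k \<in> M" and occ: "occurs_at (delim k) (delim m) i" for k i
  proof -
    have fits: "i + k + 2 \<le> m + 2" using occ by (simp add: occurs_at_def)
    have "delim m ! i = False"
      using occurs_at_nth[OF occ, of 0] fits by (simp add: nth_delim)
    then have "i = 0" using fits by (simp add: nth_delim)
    moreover have "delim m ! (k + 1) = False"
      using occurs_at_nth[OF occ, of "k + 1"] \<open>i = 0\<close> by (simp add: nth_delim)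
    ultimately show ?thesis using fits by (simp add: nth_delim)
  qed
  show ?thesis
    unfolding multi_delim_code_iff using assms no_prefix only_at_end by auto
qed

lemma shortest_delimited_prefix_in_multi_delim_code:
  assumes no_prefix: "\<forall>k\<in>M. \<not> prefix (ones k @ [False]) y"
    and "k \<in> M" and occ: "occurs_at (delim k) y i"
    and first: "\<forall>k'\<in>M. \<forall>i'. occurs_at (delim k') y i' \<longrightarrow> i + length (delim k) \<le> i' + length (delim k')"
  shows "take (i + length (delim k)) y \<in> multi_delim_code M"
proof -
  let ?p = "take (i + length (delim k)) y"
  have "\<forall>k\<in>M. \<not> prefix (ones k @ [False]) ?p"
    using no_prefix by (meson prefix_order.dual_order.trans take_is_prefix)
  moreover have "?p = take i y @ delim k"
    using occ take_add[of i "length (delim k)" y] unfolding occurs_at_def by argo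
  then have "suffix (delim k) ?p" by (auto simp: suffix_def)
  moreover have "i' + length (delim k') = length ?p"
    if "k' \<in> M" and "occurs_at (delim k') ?p i'" for k' i'
    using occurs_at_take[OF that(2)] first that(1) occ
    by (force simp: occurs_at_def)
  ultimately show ?thesis
    unfolding multi_delim_code_iff using \<open>k \<in> M\<close> by blast
qed

lemma first_delim_occurrence:
  assumes "k \<in> M" "occurs_at (delim k) y i"
  obtains k i where "k \<in> M" "occurs_at (delim k) y i"
    "\<forall>k'\<in>M. \<forall>i'. occurs_at (delim k') y i' \<longrightarrow> i + length (delim k) \<le> i' + length (delim k')"
proof -
  obtain ki where "fst ki \<in> M" "occurs_at (delim (fst ki)) y (snd ki)"
    "\<forall>k'\<in>M. \<forall>i'. occurs_at (delim k') y i' \<longrightarrow>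
        snd ki + length (delim (fst ki)) \<le> i' + length (delim k')"
    using assms ex_has_least_nat[of "\<lambda>(k, i). k \<in> M \<and> occurs_at (delim k) y i" "(k, i)"
                                     "\<lambda>(k, i). i + length (delim k)"]
    by fastforce
  then show ?thesis using that by blast
qed

lemma delim_end_in_appended_delim:
  assumes occ: "occurs_at (delim k) (x @ delim m) i" and "length x < i + length (delim k)"
  shows "i + length (delim k) = length x + 1 \<or> i + length (delim k) = length x + length (delim m)"
proof -
  have "(x @ delim m) ! (i + (k + 1)) = False"
    using occurs_at_nth[OF occ, of "k + 1"] by (simp add: nth_delim)
  then have "delim m ! (i + k + 1 - length x) = False"
    using assms(2) by (simp add: nth_append split: if_splits)
  moreover have "i + k + 2 \<le> length x + m + 2" using occ by (simp add: occurs_at_def)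
  ultimately show ?thesis using assms(2) by (auto simp: nth_delim)
qed

lemma prefix_ones_False_append_delim:
  assumes pre: "prefix (ones k @ [False]) (x @ delim m)"
  shows "prefix (ones k @ [False]) x \<or> x = ones k"
proof (cases "k + 1 \<le> length x")
  case True
  then show ?thesis
    using prefix_length_prefix[OF pre, of x] by (simp add: ones_def)
next
  case False
  have "length x = k"
  proof (rule ccontr)
    assume "length x \<noteq> k"
    with False have "length x < k" by simp
    obtain zs where zs: "x @ delim m = ones k @ [False] @ zs"
      using pre by (auto simp: prefix_def)
    have "(ones k @ [False] @ zs) ! length x = True"
      using \<open>length x < k\<close> by (simp add: nth_append ones_def)
    then show False
      unfolding zs[symmetric] by (simp add: nth_append nth_delim)
  qed
  then show ?thesis
    using pre by (auto simp: prefix_def ones_def)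
qed

lemma multi_delim_code_prefix_or_factorization:
  assumes "m \<in> M"
  shows "(\<exists>c x'. c \<in> multi_delim_code M \<and> c \<noteq> [] \<and> x = c @ x')
    \<or> (\<exists>cs. set cs \<subseteq> multi_delim_code M \<and> concat cs = x @ delim m)"
proof (cases "\<exists>k\<in>M. prefix (ones k @ [False]) (x @ delim m)")
  case True
  then obtain k where k: "k \<in> M" and "prefix (ones k @ [False]) (x @ delim m)" by blast
  then consider "prefix (ones k @ [False]) x" | "x = ones k"
    using prefix_ones_False_append_delim by blast
  then show ?thesis
  proof cases
    case 1
    then show ?thesis
      using ones_False_in_multi_delim_code[OF k] by (auto simp: prefix_def)
  next
    case 2
    then show ?thesis
      using ones_False_in_multi_delim_code[OF k] ones_False_in_multi_delim_code[OF assms]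
      by (intro disjI2 exI[of _ "[ones k @ [False], ones m @ [False]]"]) (simp add: delim_def)
  qed
next
  case no_prefix: False
  define y where "y = x @ delim m"
  have "occurs_at (delim m) y (length x)" by (simp add: occurs_at_def y_def)
  then obtain k i where k: "k \<in> M" and occ: "occurs_at (delim k) y i"
    and first: "\<forall>k'\<in>M. \<forall>i'. occurs_at (delim k') y i' \<longrightarrow>
                  i + length (delim k) \<le> i' + length (delim k')"
    using first_delim_occurrence assms by metis
  define e where "e = i + length (delim k)"
  define p where "p = take e y"
  have "\<forall>k\<in>M. \<not> prefix (ones k @ [False]) y" using no_prefix by (simp add: y_def)
  then have pD: "p \<in> multi_delim_code M"
    unfolding p_def e_def using shortest_delimited_prefix_in_multi_delim_code k occ first by blast
  show ?thesis
  proof (cases "e \<le> length x")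
    case True
    then have "x = p @ drop e x" "p \<noteq> []"
      by (auto simp: p_def y_def e_def)
    then show ?thesis using pD by blast
  next
    case False
    then have "e = length x + 1 \<or> e = length y"
      using delim_end_in_appended_delim occ by (simp add: e_def y_def)
    then show ?thesis
    proof
      assume "e = length x + 1"
      then have "x @ delim m = p @ ones m @ [False]"
        by (simp add: p_def y_def delim_def)
      then show ?thesis
        using pD ones_False_in_multi_delim_code[OF assms]
        by (intro disjI2 exI[of _ "[p, ones m @ [False]]"]) simp
    next
      assume "e = length y"
      then show ?thesis
        using pD by (intro disjI2 exI[of _ "[p]"]) (simp add: p_def y_def)
    qed
  qed
qed

lemma append_delim_factorizes:
  assumes "m \<in> M"
  shows "\<exists>cs. set cs \<subseteq> multi_delim_code M \<and> concat cs = x @ delim m"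
proof (induction x rule: length_induct)
  case (1 x)
  show ?case
    using multi_delim_code_prefix_or_factorization[OF assms, of x]
  proof
    assume "\<exists>c x'. c \<in> multi_delim_code M \<and> c \<noteq> [] \<and> x = c @ x'"
    then obtain c x' where c: "c \<in> multi_delim_code M" "c \<noteq> []" and x: "x = c @ x'"
      by blast
    obtain cs where "set cs \<subseteq> multi_delim_code M" "concat cs = x' @ delim m"
      using "1.IH" c(2) x by (metis length_append length_greater_0_conv less_add_same_cancel2)
    then show ?thesis
      using c(1) x by (intro exI[of _ "c # cs"]) simp
  qed
qed

theorem theorem3:
  fixes ms :: "nat list" and w :: "bool list"
  assumes "ms \<noteq> []"
    and "sorted_wrt (<) ms"
    and "\<forall>m\<in>set ms. 0 < m"
    and "w \<notin> multi_delim_code (set ms)"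
  shows "\<not> uniquely_decodable (multi_delim_code (set ms) \<union> {w})"
proof
  let ?D = "multi_delim_code (set ms)"
  assume ud: "uniquely_decodable (?D \<union> {w})"
  obtain m where m: "m \<in> set ms" using assms(1) by fastforce
  obtain cs where cs: "set cs \<subseteq> ?D" "concat cs = w @ delim m"
    using append_delim_factorizes[OF m] by blast
  have "set [w, delim m] \<subseteq> ?D \<union> {w}" "set cs \<subseteq> ?D \<union> {w}"
    using delim_in_multi_delim_code[OF m assms(3)] cs(1) by auto
  then have "[w, delim m] = cs"
    using ud cs(2) unfolding uniquely_decodable_def by simp
  then show False using cs(1) assms(4) by auto
qed

end
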